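(* Let $E\to M$ be a holomorphic Lie algebroid of rank $m$ over a complex $n$-manifold with $\operatorname{rank}\rho=m<n$, let $(T'M,L)$ be a complex Lagrange space with Chern–Lagrange nonlinear connection $N^i_k=g^{\bar j i}\frac{\partial^2L}{\partial z^k\partial\bar\eta^j}$, and let $N^\alpha_k(z,u)=\rho^\alpha_i\big(N^i_k(z,\eta)+u^\gamma\frac{\partial\rho^i_\gamma}{\partial z^k}\big)$, $\eta^i=\rho^i_\gamma u^\gamma$, be the nonlinear connection induced on $E$ by it. Let $L^*(z,u)=L(z,\rho(z)u)$ and $g_{\alpha\bar\beta}=\frac{\partial^2L^*}{\partial u^\alpha\partial\bar u^\beta}=\rho^i_\alpha\overline{\rho^j_\beta}g_{i\bar j}$, with inverse $g^{\bar\beta\alpha}$. Then \[ N^\alpha_k=g^{\bar\beta\alpha}\frac{\partial^2L^*}{\partial z^k\partial\bar u^\beta}, \] where $\partial/\partial z^k$ is taken in the coordinates $(z,u)$ of $E$.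
   Context: Coordinates $(z^k,\eta^k)$ on $T'M$ and $(z^k,u^\alpha)$ on $E$; the anchor has holomorphic coefficients $\rho^k_\alpha(z)$. $(T'M,L)$: $L$ real function on $T'M$ with nondegenerate metric tensor $g_{i\bar j}=\partial^2L/\partial\eta^i\partial\bar\eta^j$, inverse $g^{\bar j i}$ ($g^{\bar ji}g_{k\bar j}=\delta^i_k$); $g^{\bar\beta\alpha}g_{\gamma\bar\beta}=\delta^\alpha_\gamma$. At each point (with $\eta=\rho u$) the vectors $\rho^k_\alpha\partial/\partial\eta^k$ are completed by vectors $Y_a=Y^k_a\partial/\partial\eta^k$, $a=1,\dots,n-m$, with $g_{i\bar j}Y^i_a\overline{\rho^j_\alpha}=0$ and $g_{i\bar j}Y^i_a\overline{Y^j_b}=\delta_{ab}$; the matrix $R=[\rho^i_\alpha;Y^i_a]$ is invertible and $\rho^\alpha_i$, $Y^a_i$ denote the rows of $R^{-1}$: $\rho^\alpha_i\rho^i_\beta=\delta^\alpha_\beta$, $\rho^\alpha_iY^i_a=0$, $Y^a_i\rho^i_\alpha=0$, $Y^a_iY^i_b=\delta^a_b$, $\rho^j_\alpha\rho^\alpha_i+Y^j_aY^a_i=\delta^j_i$. *)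

theory Defs
  imports "HOL-Analysis.Analysis"
begin

definition dRe :: "'i::finite \<Rightarrow> (complex^'i \<Rightarrow> complex) \<Rightarrow> complex^'i \<Rightarrow> complex" where
  "dRe k f p = vector_derivative (\<lambda>t::real. f (p + complex_of_real t *s axis k 1)) (at 0)"

definition dIm :: "'i::finite \<Rightarrow> (complex^'i \<Rightarrow> complex) \<Rightarrow> complex^'i \<Rightarrow> complex" where
  "dIm k f p = vector_derivative (\<lambda>t::real. f (p + (\<i> * complex_of_real t) *s axis k 1)) (at 0)"

definition dZ :: "'i::finite \<Rightarrow> (complex^'i \<Rightarrow> complex) \<Rightarrow> complex^'i \<Rightarrow> complex" where
  "dZ k f p = (dRe k f p - \<i> * dIm k f p) / 2"

definition dZbar :: "'i::finite \<Rightarrow> (complex^'i \<Rightarrow> complex) \<Rightarrow> complex^'i \<Rightarrow> complex" where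
  "dZbar k f p = (dRe k f p + \<i> * dIm k f p) / 2"

definition C2_on :: "'a::real_normed_vector set \<Rightarrow> ('a \<Rightarrow> 'b::real_normed_vector) \<Rightarrow> bool" where
  "C2_on S f \<longleftrightarrow> (\<exists>f' f''.
      (\<forall>x\<in>S. (f has_derivative blinfun_apply (f' x)) (at x)) \<and>
      (\<forall>x\<in>S. (f' has_derivative blinfun_apply (f'' x)) (at x)) \<and>
      continuous_on S f'')"

definition holo_on :: "(complex^'n) set \<Rightarrow> (complex^'n \<Rightarrow> complex) \<Rightarrow> bool" where
  "holo_on U f \<longleftrightarrow> (\<forall>z\<in>U. \<exists>D. (f has_derivative D) (at z) \<and>
                         (\<forall>c v. D (c *s v) = c * D v))"

definition metric :: "(complex^'n \<Rightarrow> complex^'n \<Rightarrow> real) \<Rightarrow> complex^'n \<Rightarrow> complex^'n \<Rightarrow> complex^'n^'n" where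
  "metric L z \<eta> = (\<chi> i j. dZ i (\<lambda>\<eta>'. dZbar j (\<lambda>\<eta>''. complex_of_real (L z \<eta>'')) \<eta>') \<eta>)"

definition chern_lagrange_N :: "(complex^'n \<Rightarrow> complex^'n \<Rightarrow> real) \<Rightarrow> complex^'n \<Rightarrow> complex^'n \<Rightarrow> 'n \<Rightarrow> 'n \<Rightarrow> complex" where
  "chern_lagrange_N L z \<eta> i k =
     (\<Sum>j\<in>UNIV. matrix_inv (metric L z \<eta>) $ j $ i *
        dZ k (\<lambda>z'. dZbar j (\<lambda>\<eta>'. complex_of_real (L z' \<eta>')) \<eta>) z)"

end

theory Submission
  imports Defs
begin

text \<open>
  Write R for the anchor matrix \<rho>(z). For fixed z the function u \<mapsto> L(z, R u) is L composed
  with a complex-linear map, so the Wirtinger chain rule gives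
  dL*/du-bar^\<beta> = conj(R^j_\<beta>) dL/d\<eta>-bar^j, and differentiating once more g* = R^T g conj(R).
  Differentiating dL*/du-bar^\<beta> in z instead, holomorphy of \<rho> kills the derivative of
  conj(\<rho>) and the chain rule through \<eta> = \<rho>(z) u gives
  d^2L*/dz^k du-bar^\<beta> = conj(R^j_\<beta>) (d^2L/dz^k d\<eta>-bar^j + u^\<gamma> d\<rho>^l_\<gamma>/dz^k g_{l jbar}).
  Since the Y_a are g-orthogonal to the image of R, the splitting R R^-1 + Y Y^-1 = 1 yields
  g conj(R) = (R^-1)^T g*, so multiplying the last formula by g*^-1 extracts exactly
  \<rho>^\<alpha>_i (N^i_k + u^\<gamma> d\<rho>^i_\<gamma>/dz^k).
\<close>

section \<open>Wirtinger derivatives of real-linear maps\<close>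

definition linear_dZ :: "(complex^'n \<Rightarrow> complex) \<Rightarrow> 'n \<Rightarrow> complex" where
  "linear_dZ D k = (D (axis k 1) - \<i> * D (axis k \<i>)) / 2"

definition linear_dZbar :: "(complex^'n \<Rightarrow> complex) \<Rightarrow> 'n \<Rightarrow> complex" where
  "linear_dZbar D k = (D (axis k 1) + \<i> * D (axis k \<i>)) / 2"

lemma axis_eq_scale_axis_1: "axis k c = c *s axis k (1::'a::ring_1)"
  by (simp add: vec_eq_iff axis_def)

lemma linear_dZ_add: "linear_dZ (\<lambda>v. D v + E v) k = linear_dZ D k + linear_dZ E k"
  by (simp add: linear_dZ_def field_simps)

lemma linear_dZ_mult_left: "linear_dZ (\<lambda>v. c * D v) k = c * linear_dZ D k"
  by (simp add: linear_dZ_def field_simps)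

lemma linear_dZ_mult_right: "linear_dZ (\<lambda>v. D v * c) k = linear_dZ D k * c"
  by (simp add: linear_dZ_def field_simps)

lemma linear_dZ_sum: "linear_dZ (\<lambda>v. \<Sum>j\<in>A. D j v) k = (\<Sum>j\<in>A. linear_dZ (D j) k)"
  unfolding linear_dZ_def sum_divide_distrib[symmetric] by (simp add: sum_subtractf sum_distrib_left)

lemma linear_dZbar_eq_cnj_linear_dZ: "linear_dZbar D k = cnj (linear_dZ (\<lambda>v. cnj (D v)) k)"
  by (simp add: linear_dZbar_def linear_dZ_def)

lemma linear_dZ_complex_linear:
  assumes "\<And>c v. D (c *s v) = c * D v"
  shows "linear_dZ D k = D (axis k 1)" and "linear_dZ (\<lambda>v. cnj (D v)) k = 0"
  unfolding linear_dZ_def axis_eq_scale_axis_1[of k \<i>] assms by (simp_all add: algebra_simps)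

lemma scale_eq_scaleR_Re_Im: "c *s v = Re c *\<^sub>R v + Im c *\<^sub>R (\<i> *s v)" for v :: "complex^'n"
  by (simp add: vec_eq_iff complex_eq_iff)

lemma real_linear_wirtinger_expansion:
  assumes "bounded_linear D"
  shows "D v = (\<Sum>l\<in>UNIV. v $ l * linear_dZ D l + cnj (v $ l) * linear_dZbar D l)"
proof -
  have "D v = (\<Sum>l\<in>UNIV. D ((v $ l) *s axis l 1))"
    by (metis assms basis_expansion bounded_linear.linear linear_sum)
  also have "\<dots> = (\<Sum>l\<in>UNIV. v $ l * linear_dZ D l + cnj (v $ l) * linear_dZbar D l)"
  proof (rule sum.cong)
    fix l
    have "D ((v $ l) *s axis l 1) = Re (v $ l) *\<^sub>R D (axis l 1) + Im (v $ l) *\<^sub>R D (axis l \<i>)"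
      using assms by (simp add: scale_eq_scaleR_Re_Im[of "v $ l"] axis_eq_scale_axis_1[of l \<i>]
          linear_simps)
    then show "D ((v $ l) *s axis l 1) = v $ l * linear_dZ D l + cnj (v $ l) * linear_dZbar D l"
      by (simp add: linear_dZ_def linear_dZbar_def complex_eq_iff field_simps)
  qed simp
  finally show ?thesis .
qed

lemma linear_dZ_compose:
  assumes D: "bounded_linear D" and P: "\<And>c v. P (c *s v) = c *s P v"
  shows "linear_dZ (\<lambda>v. D (P v)) k = (\<Sum>l\<in>UNIV. P (axis k 1) $ l * linear_dZ D l)"
proof -
  have P_l: "P (c *s v) $ l = c * P v $ l" for c v l
    by (simp add: P)
  have "linear_dZ (\<lambda>v. D (P v)) k
      = linear_dZ (\<lambda>v. \<Sum>l\<in>UNIV. P v $ l * linear_dZ D l + cnj (P v $ l) * linear_dZbar D l) k"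
    by (subst real_linear_wirtinger_expansion[OF D]) (rule refl)
  also have "\<dots> = (\<Sum>l\<in>UNIV. linear_dZ (\<lambda>v. P v $ l) k * linear_dZ D l
                    + linear_dZ (\<lambda>v. cnj (P v $ l)) k * linear_dZbar D l)"
    by (simp add: linear_dZ_sum linear_dZ_add linear_dZ_mult_right)
  also have "\<dots> = (\<Sum>l\<in>UNIV. P (axis k 1) $ l * linear_dZ D l)"
    \<comment> \<open>P is complex-linear, so the conjugate-linear part of D contributes nothing\<close>
    by (simp add: linear_dZ_complex_linear[OF P_l])
  finally show ?thesis .
qed

lemma linear_dZbar_compose:
  assumes D: "bounded_linear D" and P: "\<And>c v. P (c *s v) = c *s P v"
  shows "linear_dZbar (\<lambda>v. D (P v)) k = (\<Sum>l\<in>UNIV. cnj (P (axis k 1) $ l) * linear_dZbar D l)"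
proof -
  have "bounded_linear (\<lambda>v. cnj (D v))"
    using bounded_linear_compose[OF bounded_linear_cnj D] by simp
  then show ?thesis
    by (simp add: linear_dZbar_eq_cnj_linear_dZ linear_dZ_compose[OF _ P, of "\<lambda>v. cnj (D v)"])
qed

section \<open>Wirtinger derivatives of differentiable functions\<close>

lemma vector_derivative_along_line:
  fixes f :: "complex^'n \<Rightarrow> complex"
  assumes f: "(f has_derivative D) (at p)"
  shows "vector_derivative (\<lambda>t::real. f (p + complex_of_real t *s e)) (at 0) = D e"
proof -
  have line: "p + complex_of_real t *s e = p + t *\<^sub>R e" for t
    by (simp add: vec_eq_iff of_real_def del: of_real_eq_iff)
  have "((\<lambda>t::real. f (p + t *\<^sub>R e)) has_derivative (\<lambda>t. D (t *\<^sub>R e))) (at 0)"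
    using f by (auto intro!: derivative_eq_intros has_derivative_compose[of _ _ 0 UNIV f D])
  moreover have "(\<lambda>t. D (t *\<^sub>R e)) = (\<lambda>t. t *\<^sub>R D e)"
    using has_derivative_bounded_linear[OF f] by (simp add: linear_simps)
  ultimately show ?thesis
    by (intro vector_derivative_at) (simp add: line has_vector_derivative_def)
qed

lemma dZ_eq_linear_dZ:
  assumes "(f has_derivative D) (at p)"
  shows "dZ k f p = linear_dZ D k" and "dZbar k f p = linear_dZbar D k"
proof -
  have "(\<i> * complex_of_real t) *s axis k 1 = complex_of_real t *s axis k \<i>" for t
    by (auto simp: vec_eq_iff axis_def)
  then show "dZ k f p = linear_dZ D k" "dZbar k f p = linear_dZbar D k"
    using vector_derivative_along_line[OF assms]
    by (simp_all add: dZ_def dZbar_def dRe_def dIm_def linear_dZ_def linear_dZbar_def)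
qed

lemma dZ_eq_linear_dZ_frechet:
  "f differentiable (at p) \<Longrightarrow> dZ k f p = linear_dZ (frechet_derivative f (at p)) k"
  by (simp add: dZ_eq_linear_dZ frechet_derivative_works)

lemma dZ_cong_open:
  assumes S: "open S" "p \<in> S" and fg: "\<And>x. x \<in> S \<Longrightarrow> f x = g x"
  shows "dZ k f p = dZ k g p"
proof -
  have along_line: "vector_derivative (\<lambda>t::real. f (p + t *\<^sub>R w)) (at 0)
      = vector_derivative (\<lambda>t::real. g (p + t *\<^sub>R w)) (at 0)" for w
  proof (rule vector_derivative_cong_eq)
    have "open ((\<lambda>t::real. p + t *\<^sub>R w) -` S)"
      by (rule open_vimage[OF S(1)]) (intro continuous_intros)
    moreover have "0 \<in> (\<lambda>t::real. p + t *\<^sub>R w) -` S"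
      using S(2) by simp
    ultimately show "\<forall>\<^sub>F t in nhds 0. t \<in> UNIV \<longrightarrow> f (p + t *\<^sub>R w) = g (p + t *\<^sub>R w)"
      unfolding eventually_nhds using fg by blast
  qed auto
  have "complex_of_real t *s axis k 1 = t *\<^sub>R axis k 1"
    and "(\<i> * complex_of_real t) *s axis k 1 = t *\<^sub>R axis k \<i>" for t
    by (auto simp: vec_eq_iff axis_def of_real_def)
  then show ?thesis
    by (simp add: dZ_def dRe_def dIm_def along_line)
qed

lemma dZ_const: "dZ k (\<lambda>x. c) p = 0"
  by (simp add: dZ_eq_linear_dZ(1)[OF has_derivative_const] linear_dZ_def)

lemma dZ_sum:
  assumes "\<And>j. j \<in> A \<Longrightarrow> f j differentiable (at p)"
  shows "dZ k (\<lambda>x. \<Sum>j\<in>A. f j x) p = (\<Sum>j\<in>A. dZ k (f j) p)"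
proof -
  have "((\<lambda>x. \<Sum>j\<in>A. f j x) has_derivative (\<lambda>v. \<Sum>j\<in>A. frechet_derivative (f j) (at p) v)) (at p)"
    using assms by (intro has_derivative_sum) (simp add: frechet_derivative_works)
  then show ?thesis
    using assms by (simp add: dZ_eq_linear_dZ(1) dZ_eq_linear_dZ_frechet linear_dZ_sum)
qed

lemma dZ_mult:
  fixes f g :: "complex^'n \<Rightarrow> complex"
  assumes f: "f differentiable (at p)" and g: "g differentiable (at p)"
  shows "dZ k (\<lambda>x. f x * g x) p = f p * dZ k g p + dZ k f p * g p"
proof -
  have "((\<lambda>x. f x * g x) has_derivative
      (\<lambda>v. f p * frechet_derivative g (at p) v + frechet_derivative f (at p) v * g p)) (at p)"
    using f g by (intro has_derivative_mult) (simp_all add: frechet_derivative_works)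
  then show ?thesis
    using f g by (simp add: dZ_eq_linear_dZ(1) dZ_eq_linear_dZ_frechet linear_dZ_add
        linear_dZ_mult_left linear_dZ_mult_right)
qed

lemma has_derivative_linear_dZbar:
  assumes "\<And>w. ((\<lambda>x. F x w) has_derivative (\<lambda>v. F' v w)) (at x)"
  shows "((\<lambda>x. linear_dZbar (F x) j) has_derivative (\<lambda>v. linear_dZbar (F' v) j)) (at x)"
  unfolding linear_dZbar_def by (auto intro!: derivative_eq_intros assms)

lemma matrix_vector_mult_axis_nth: "((A::'a::comm_ring_1^'m^'n) *v axis a 1) $ i = A $ i $ a"
  by (simp add: matrix_vector_mult_def axis_def if_distrib sum.If_cases)

lemma dZ_matrix_vector_compose:
  fixes R :: "complex^'m^'n" and f :: "complex^'n \<Rightarrow> complex"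
  assumes "f differentiable (at (R *v u))"
  shows "dZ a (\<lambda>v. f (R *v v)) u = (\<Sum>i\<in>UNIV. R $ i $ a * dZ i f (R *v u))"
    and "dZbar a (\<lambda>v. f (R *v v)) u = (\<Sum>i\<in>UNIV. cnj (R $ i $ a) * dZbar i f (R *v u))"
proof -
  let ?D = "frechet_derivative f (at (R *v u))"
  have D: "(f has_derivative ?D) (at (R *v u))"
    using assms frechet_derivative_works by blast
  have R: "bounded_linear (\<lambda>v. R *v v)"
    by (simp add: linear_conv_bounded_linear)
  have comp: "((\<lambda>v. f (R *v v)) has_derivative (\<lambda>v. ?D (R *v v))) (at u)"
    using has_derivative_compose[OF bounded_linear_imp_has_derivative[OF R] D] by simp
  have R_scale: "R *v (c *s v) = c *s (R *v v)" for c v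
    by (simp add: vector_scalar_commute)
  show "dZ a (\<lambda>v. f (R *v v)) u = (\<Sum>i\<in>UNIV. R $ i $ a * dZ i f (R *v u))"
    using has_derivative_bounded_linear[OF D]
    by (simp add: dZ_eq_linear_dZ(1)[OF comp] dZ_eq_linear_dZ(1)[OF D] linear_dZ_compose R_scale
        matrix_vector_mult_axis_nth)
  show "dZbar a (\<lambda>v. f (R *v v)) u = (\<Sum>i\<in>UNIV. cnj (R $ i $ a) * dZbar i f (R *v u))"
    using has_derivative_bounded_linear[OF D]
    by (simp add: dZ_eq_linear_dZ(2)[OF comp] dZ_eq_linear_dZ(2)[OF D] linear_dZbar_compose R_scale
        matrix_vector_mult_axis_nth)
qed

section \<open>Chain rule through a holomorphic map\<close>

lemma has_derivative_vec_componentwise: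
  fixes f :: "'a::real_normed_vector \<Rightarrow> 'b::euclidean_space^'n"
  assumes "\<And>l. ((\<lambda>x. f x $ l) has_derivative (\<lambda>h. f' h $ l)) (at x)"
  shows "(f has_derivative f') (at x)"
proof -
  have "((\<lambda>x. f x \<bullet> b) has_derivative (\<lambda>h. f' h \<bullet> b)) (at x)" if "b \<in> Basis" for b
  proof -
    obtain l c where b: "b = axis l c" using \<open>b \<in> Basis\<close> by (auto simp: Basis_vec_def)
    show ?thesis
      unfolding b inner_axis
      using bounded_linear.has_derivative[OF bounded_linear_inner_left assms] by simp
  qed
  then show ?thesis
    using has_derivative_componentwise_within[of f f' x UNIV] by simp
qed

lemma has_derivative_partial_fst:
  assumes "(F has_derivative D) (at (a, b))"
  shows "((\<lambda>x. F (x, b)) has_derivative (\<lambda>v. D (v, 0))) (at a)"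
proof -
  have "((\<lambda>x. (x, b)) has_derivative (\<lambda>v. (v, 0))) (at a)"
    by (auto intro!: derivative_eq_intros)
  then show ?thesis
    using has_derivative_compose assms by fastforce
qed

lemma has_derivative_partial_snd:
  assumes "(F has_derivative D) (at (a, b))"
  shows "((\<lambda>y. F (a, y)) has_derivative (\<lambda>w. D (0, w))) (at b)"
proof -
  have "((\<lambda>y. (a, y)) has_derivative (\<lambda>w. (0, w))) (at b)"
    by (auto intro!: derivative_eq_intros)
  then show ?thesis
    using has_derivative_compose assms by fastforce
qed

lemma holo_on_frechet_derivative:
  assumes "holo_on U f" "z \<in> U"
  shows "(f has_derivative frechet_derivative f (at z)) (at z)"
    and "frechet_derivative f (at z) (c *s v) = c * frechet_derivative f (at z) v"
proof -
  obtain D where D: "(f has_derivative D) (at z)" and lin: "\<And>c v. D (c *s v) = c * D v"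
    using assms unfolding holo_on_def by blast
  show "(f has_derivative frechet_derivative f (at z)) (at z)"
       "frechet_derivative f (at z) (c *s v) = c * frechet_derivative f (at z) v"
    using D lin frechet_derivative_at[OF D] by simp_all
qed

lemma dZ_cnj_holo_on:
  assumes "holo_on U f" "z \<in> U"
  shows "dZ k (\<lambda>x. cnj (f x)) z = 0"
proof -
  have "((\<lambda>x. cnj (f x)) has_derivative (\<lambda>v. cnj (frechet_derivative f (at z) v))) (at z)"
    using bounded_linear.has_derivative[OF bounded_linear_cnj holo_on_frechet_derivative(1)[OF assms]] .
  then show ?thesis
    by (simp add: dZ_eq_linear_dZ(1) linear_dZ_complex_linear(2) holo_on_frechet_derivative(2)[OF assms])
qed

lemma holo_on_matrix_vector_mult:
  assumes "\<And>i \<gamma>. holo_on U (\<lambda>z. \<rho> z $ i $ \<gamma>)"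
  shows "holo_on U (\<lambda>z. (\<rho> z *v u) $ i)"
  unfolding holo_on_def
proof
  fix z assume z: "z \<in> U"
  let ?D = "\<lambda>\<gamma>. frechet_derivative (\<lambda>z. \<rho> z $ i $ \<gamma>) (at z)"
  have "((\<lambda>z. (\<rho> z *v u) $ i) has_derivative (\<lambda>v. \<Sum>\<gamma>\<in>UNIV. ?D \<gamma> v * u $ \<gamma>)) (at z)"
    unfolding matrix_vector_mult_def vec_lambda_beta
    by (intro has_derivative_sum has_derivative_mult_left holo_on_frechet_derivative(1)[OF assms z])
  moreover have "(\<Sum>\<gamma>\<in>UNIV. ?D \<gamma> (c *s v) * u $ \<gamma>) = c * (\<Sum>\<gamma>\<in>UNIV. ?D \<gamma> v * u $ \<gamma>)" for c v
    by (simp add: holo_on_frechet_derivative(2)[OF assms z] sum_distrib_left mult.assoc)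
  ultimately show "\<exists>D. ((\<lambda>z. (\<rho> z *v u) $ i) has_derivative D) (at z) \<and> (\<forall>c v. D (c *s v) = c * D v)"
    by blast
qed

lemma holo_on_vec_has_derivative:
  assumes "\<And>l. holo_on U (\<lambda>x. \<phi> x $ l)" "p \<in> U"
  shows "(\<phi> has_derivative (\<lambda>v. \<chi> l. frechet_derivative (\<lambda>x. \<phi> x $ l) (at p) v)) (at p)"
  by (rule has_derivative_vec_componentwise) (simp add: holo_on_frechet_derivative(1)[OF assms])

lemma dZ_compose_holomorphic:
  fixes F :: "(complex^'n) \<times> (complex^'m) \<Rightarrow> complex" and \<phi> :: "complex^'n \<Rightarrow> complex^'m"
  assumes F: "F differentiable (at (p, \<phi> p))"
    and \<phi>: "\<And>l. holo_on U (\<lambda>x. \<phi> x $ l)" and p: "p \<in> U"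
  shows "dZ k (\<lambda>x. F (x, \<phi> x)) p
       = dZ k (\<lambda>x. F (x, \<phi> p)) p
         + (\<Sum>l\<in>UNIV. dZ k (\<lambda>x. \<phi> x $ l) p * dZ l (\<lambda>y. F (p, y)) (\<phi> p))"
proof -
  let ?DF = "frechet_derivative F (at (p, \<phi> p))"
  let ?D\<phi> = "\<lambda>l. frechet_derivative (\<lambda>x. \<phi> x $ l) (at p)"
  define P where "P v = (\<chi> l. ?D\<phi> l v)" for v
  have DF: "(F has_derivative ?DF) (at (p, \<phi> p))"
    using F frechet_derivative_works by blast
  have D\<phi>: "((\<lambda>x. \<phi> x $ l) has_derivative ?D\<phi> l) (at p)" for l
    using holo_on_frechet_derivative(1)[OF \<phi> p] .
  have "(\<phi> has_derivative P) (at p)"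
    unfolding P_def by (rule holo_on_vec_has_derivative[OF \<phi> p])
  then have "((\<lambda>x. (x, \<phi> x)) has_derivative (\<lambda>v. (v, P v))) (at p)"
    by (rule has_derivative_Pair[OF has_derivative_ident])
  then have "((\<lambda>x. F (x, \<phi> x)) has_derivative (\<lambda>v. ?DF (v, P v))) (at p)"
    using has_derivative_compose DF by fastforce
  moreover have "?DF (v, P v) = ?DF (v, 0) + ?DF (0, P v)" for v
    using linear_add[OF has_derivative_linear[OF DF], of "(v, 0)" "(0, P v)"] by simp
  ultimately have "dZ k (\<lambda>x. F (x, \<phi> x)) p
      = linear_dZ (\<lambda>v. ?DF (v, 0)) k + linear_dZ (\<lambda>v. ?DF (0, P v)) k"
    by (simp add: dZ_eq_linear_dZ(1) linear_dZ_add)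
  moreover have "linear_dZ (\<lambda>v. ?DF (v, 0)) k = dZ k (\<lambda>x. F (x, \<phi> p)) p"
    using dZ_eq_linear_dZ(1)[OF has_derivative_partial_fst[OF DF]] by simp
  moreover have "linear_dZ (\<lambda>v. ?DF (0, P v)) k
      = (\<Sum>l\<in>UNIV. dZ k (\<lambda>x. \<phi> x $ l) p * dZ l (\<lambda>y. F (p, y)) (\<phi> p))"
  proof -
    have DF_snd: "bounded_linear (\<lambda>w. ?DF (0, w))"
      using has_derivative_bounded_linear[OF has_derivative_partial_snd[OF DF]] .
    have "P (c *s v) = c *s P v" for c v
      by (simp add: P_def vec_eq_iff holo_on_frechet_derivative(2)[OF \<phi> p])
    moreover have "P (axis k 1) $ l = dZ k (\<lambda>x. \<phi> x $ l) p" for l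
      by (simp add: P_def dZ_eq_linear_dZ(1)[OF D\<phi>]
          linear_dZ_complex_linear(1)[OF holo_on_frechet_derivative(2)[OF \<phi> p]])
    ultimately show ?thesis
      by (simp add: linear_dZ_compose[OF DF_snd] dZ_eq_linear_dZ(1)[OF has_derivative_partial_snd[OF DF]])
  qed
  ultimately show ?thesis by simp
qed

section \<open>Linear algebra of the pulled-back metric\<close>

definition conj_mat :: "complex^'m^'n \<Rightarrow> complex^'m^'n" where
  "conj_mat A = (\<chi> i j. cnj (A $ i $ j))"

lemma conj_mat_mult: "conj_mat (A ** B) = conj_mat A ** conj_mat B"
  by (simp add: vec_eq_iff conj_mat_def matrix_matrix_mult_def)

lemma conj_mat_mat: "conj_mat (mat c) = mat (cnj c)"
  by (simp add: vec_eq_iff conj_mat_def mat_def)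

lemma transpose_add: "transpose (A + B) = transpose A + transpose (B::'a::semiring_1^'n^'m)"
  by (simp add: vec_eq_iff transpose_def)

lemma matrix_add_rdistrib: "(A + B) ** C = A ** C + B ** (C::'a::semiring_1^'p^'n)"
  by (simp add: vec_eq_iff matrix_matrix_mult_def distrib_right sum.distrib)

lemma transpose_mult_conj_mat_nth:
  "(transpose Y ** G ** conj_mat R) $ a $ b
     = (\<Sum>i\<in>UNIV. \<Sum>j\<in>UNIV. G $ i $ j * Y $ i $ a * cnj (R $ j $ b))"
  unfolding matrix_matrix_mult_def transpose_def conj_mat_def
  by (subst sum.swap) (simp add: sum_distrib_left sum_distrib_right mult_ac)

lemma matrix_inv_mult:
  assumes "invertible A"
  shows "A ** matrix_inv A = mat 1" and "matrix_inv A ** A = mat 1"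
  using someI_ex[OF assms[unfolded invertible_def]] unfolding matrix_inv_def by auto

lemma pullback_metric_inverse_solve:
  fixes G :: "complex^'n^'n" and R :: "complex^'m^'n" and Y :: "complex^'k^'n"
    and Rinv :: "complex^'n^'m" and Yinv :: "complex^'n^'k"
  assumes G: "invertible G"
    and orth: "transpose Y ** G ** conj_mat R = 0"
    and left_inv: "Rinv ** R = mat 1"
    and split: "R ** Rinv + Y ** Yinv = mat 1"
  shows "(V v* (G ** conj_mat R)) v* matrix_inv (transpose R ** G ** conj_mat R) = Rinv *v V"
proof -
  let ?g = "transpose R ** G ** conj_mat R"
  have "G ** conj_mat R = (transpose Rinv ** transpose R + transpose Yinv ** transpose Y) ** (G ** conj_mat R)"
    using arg_cong[OF split, of transpose]
    by (simp add: transpose_add matrix_transpose_mul)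
  also have "\<dots> = transpose Rinv ** ?g + transpose Yinv ** (transpose Y ** G ** conj_mat R)"
    by (simp add: matrix_add_rdistrib matrix_mul_assoc)
  also have "\<dots> = transpose Rinv ** ?g"
    by (simp add: orth)
  finally have G_conj_R: "G ** conj_mat R = transpose Rinv ** ?g" .
  have "(conj_mat Rinv ** matrix_inv G ** transpose Rinv) ** ?g
      = conj_mat Rinv ** matrix_inv G ** (transpose Rinv ** ?g)"
    by (simp add: matrix_mul_assoc)
  also have "\<dots> = conj_mat Rinv ** (matrix_inv G ** G) ** conj_mat R"
    unfolding G_conj_R[symmetric] by (simp add: matrix_mul_assoc)
  also have "\<dots> = mat 1"
    by (simp add: matrix_inv_mult[OF G] conj_mat_mult[symmetric] left_inv conj_mat_mat)
  finally have "(conj_mat Rinv ** matrix_inv G ** transpose Rinv) ** ?g = mat 1" .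
  then have "?g ** matrix_inv ?g = mat 1"
    using invertible_left_inverse matrix_inv_mult(1) by blast
  then have "((Rinv *v V) v* ?g) v* matrix_inv ?g = Rinv *v V"
    by (simp add: vector_matrix_mul_assoc)
  then show ?thesis
    by (simp add: G_conj_R vector_matrix_mul_assoc[symmetric])
qed

section \<open>The Lagrangian pulled back along the anchor\<close>

definition partial_etabar ::
    "(complex^'n \<Rightarrow> complex^'n \<Rightarrow> real) \<Rightarrow> 'n \<Rightarrow> (complex^'n) \<times> (complex^'n) \<Rightarrow> complex" where
  "partial_etabar L j x = dZbar j (\<lambda>\<eta>. complex_of_real (L (fst x) \<eta>)) (snd x)"

lemma C2_on_differentiable_snd:
  assumes "C2_on (U \<times> UNIV) (\<lambda>(z, \<eta>). L z \<eta>)" "z \<in> U"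
  shows "(\<lambda>\<eta>. complex_of_real (L z \<eta>)) differentiable (at \<eta>)"
proof -
  obtain D where "((\<lambda>(z, \<eta>). L z \<eta>) has_derivative D) (at (z, \<eta>))"
    using assms unfolding C2_on_def by blast
  from bounded_linear.has_derivative[OF bounded_linear_of_real has_derivative_partial_snd[OF this]]
  show ?thesis
    unfolding differentiable_def by auto
qed

lemma partial_etabar_differentiable:
  assumes L: "C2_on (U \<times> UNIV) (\<lambda>(z, \<eta>). L z \<eta>)" and U: "open U" "z \<in> U"
  shows "partial_etabar L j differentiable (at (z, \<eta>))"
proof -
  obtain f' f'' where
    f': "\<And>x. x \<in> U \<times> UNIV \<Longrightarrow> ((\<lambda>(z, \<eta>). L z \<eta>) has_derivative blinfun_apply (f' x)) (at x)"
    and f'': "\<And>x. x \<in> U \<times> UNIV \<Longrightarrow> (f' has_derivative blinfun_apply (f'' x)) (at x)"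
    using L unfolding C2_on_def by blast
  let ?H = "\<lambda>x. linear_dZbar (\<lambda>w. complex_of_real (f' x (0, w))) j"
  have H_eq: "?H x = partial_etabar L j x" if x: "x \<in> U \<times> UNIV" for x
  proof -
    obtain z' \<eta>' where x_eq: "x = (z', \<eta>')" by fastforce
    have "((\<lambda>\<eta>. complex_of_real (L z' \<eta>)) has_derivative (\<lambda>w. complex_of_real (f' x (0, w)))) (at \<eta>')"
      using bounded_linear.has_derivative[OF bounded_linear_of_real
          has_derivative_partial_snd[OF f'[OF x, unfolded x_eq]]] by (simp add: x_eq)
    then show ?thesis
      by (simp add: partial_etabar_def x_eq dZ_eq_linear_dZ(2))
  qed
  have H_deriv: "(?H has_derivative (\<lambda>v. linear_dZbar (\<lambda>w. complex_of_real (f'' (z, \<eta>) v (0, w))) j))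
      (at (z, \<eta>))"
  proof -
    have "((\<lambda>x. complex_of_real (f' x (0, w))) has_derivative
        (\<lambda>v. complex_of_real (f'' (z, \<eta>) v (0, w)))) (at (z, \<eta>))" for w
      using bounded_linear.has_derivative[OF bounded_linear_of_real
          blinfun.FDERIV[OF f''[of "(z, \<eta>)"] has_derivative_const, of "(0, w)"]] U(2) by simp
    then show ?thesis
      by (rule has_derivative_linear_dZbar)
  qed
  have "(partial_etabar L j has_derivative
      (\<lambda>v. linear_dZbar (\<lambda>w. complex_of_real (f'' (z, \<eta>) v (0, w))) j)) (at (z, \<eta>))"
    by (rule has_derivative_transform_within_open[OF H_deriv open_Times[OF U(1) open_UNIV]])
      (simp_all add: U(2) H_eq)
  then show ?thesis
    unfolding differentiable_def by blast
qed

lemma dZbar_pullback: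
  fixes R :: "complex^'m^'n"
  assumes "C2_on (U \<times> UNIV) (\<lambda>(z, \<eta>). L z \<eta>)" "z \<in> U"
  shows "dZbar b (\<lambda>w. complex_of_real (L z (R *v w))) v
       = (\<Sum>j\<in>UNIV. cnj (R $ j $ b) * partial_etabar L j (z, R *v v))"
  using dZ_matrix_vector_compose(2)[OF C2_on_differentiable_snd[OF assms]]
  by (simp add: partial_etabar_def)

lemma metric_eq_dZ_partial_etabar:
  "metric L z \<eta> $ i $ j = dZ i (\<lambda>\<eta>'. partial_etabar L j (z, \<eta>')) \<eta>"
  by (simp add: metric_def partial_etabar_def)

lemma metric_pullback:
  fixes R :: "complex^'m^'n"
  assumes L: "C2_on (U \<times> UNIV) (\<lambda>(z, \<eta>). L z \<eta>)" and U: "open U" "z \<in> U"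
  shows "(\<chi> a b. dZ a (\<lambda>v. dZbar b (\<lambda>w. complex_of_real (L z (R *v w))) v) u)
       = transpose R ** metric L z (R *v u) ** conj_mat R"
proof -
  have H: "(\<lambda>\<eta>. partial_etabar L j (z, \<eta>)) differentiable (at \<eta>)" for j \<eta>
    using partial_etabar_differentiable[OF L U] has_derivative_partial_snd
    unfolding differentiable_def by blast
  have "((\<lambda>v. (z, R *v v)) has_derivative (\<lambda>w. (0, R *v w))) (at v)" for v
    by (intro has_derivative_Pair has_derivative_const bounded_linear_imp_has_derivative)
      (simp add: linear_conv_bounded_linear)
  then have "(\<lambda>v. (z, R *v v)) differentiable (at v)" for v
    unfolding differentiable_def by blast
  then have HR: "(\<lambda>v. partial_etabar L j (z, R *v v)) differentiable (at v)" for j v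
    using differentiable_compose[of "partial_etabar L j" "\<lambda>v. (z, R *v v)" v UNIV]
      partial_etabar_differentiable[OF L U] by simp
  have "dZ a (\<lambda>v. dZbar b (\<lambda>w. complex_of_real (L z (R *v w))) v) u
      = (\<Sum>j\<in>UNIV. (\<Sum>i\<in>UNIV. R $ i $ a * metric L z (R *v u) $ i $ j) * cnj (R $ j $ b))" for a b
  proof -
    have "dZ a (\<lambda>v. dZbar b (\<lambda>w. complex_of_real (L z (R *v w))) v) u
        = dZ a (\<lambda>v. \<Sum>j\<in>UNIV. cnj (R $ j $ b) * partial_etabar L j (z, R *v v)) u"
      by (simp add: dZbar_pullback[OF L U(2)])
    also have "\<dots> = (\<Sum>j\<in>UNIV. cnj (R $ j $ b) * dZ a (\<lambda>v. partial_etabar L j (z, R *v v)) u)"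
      using HR by (simp add: dZ_sum dZ_mult dZ_const)
    also have "\<dots> = (\<Sum>j\<in>UNIV. cnj (R $ j $ b) * (\<Sum>i\<in>UNIV. R $ i $ a * metric L z (R *v u) $ i $ j))"
      by (simp add: dZ_matrix_vector_compose(1)[OF H] metric_eq_dZ_partial_etabar)
    finally show ?thesis
      by (simp add: mult.commute)
  qed
  then show ?thesis
    by (simp add: vec_eq_iff matrix_matrix_mult_def transpose_def conj_mat_def)
qed

lemma mixed_pullback:
  fixes \<rho> :: "complex^'n \<Rightarrow> complex^'m^'n"
  assumes L: "C2_on (U \<times> UNIV) (\<lambda>(z, \<eta>). L z \<eta>)" and U: "open U" "z \<in> U"
    and \<rho>: "\<And>i \<gamma>. holo_on U (\<lambda>z. \<rho> z $ i $ \<gamma>)"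
  shows "(\<chi> b. dZ k (\<lambda>z'. dZbar b (\<lambda>w. complex_of_real (L z' (\<rho> z' *v w))) u) z)
       = ((\<chi> j. dZ k (\<lambda>z'. partial_etabar L j (z', \<rho> z *v u)) z)
          + (\<chi> l. \<Sum>\<gamma>\<in>UNIV. u $ \<gamma> * dZ k (\<lambda>z'. \<rho> z' $ l $ \<gamma>) z) v* metric L z (\<rho> z *v u))
         v* conj_mat (\<rho> z)"
proof -
  have \<phi>: "holo_on U (\<lambda>z. (\<rho> z *v u) $ l)" for l
    by (rule holo_on_matrix_vector_mult[OF \<rho>])
  have \<rho>_diff: "(\<lambda>z. \<rho> z $ i $ \<gamma>) differentiable (at z)" for i \<gamma>
    using holo_on_frechet_derivative(1)[OF \<rho> U(2)] unfolding differentiable_def by blast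
  have cnj_\<rho>_diff: "(\<lambda>z. cnj (\<rho> z $ i $ \<gamma>)) differentiable (at z)" for i \<gamma>
    using bounded_linear.has_derivative[OF bounded_linear_cnj holo_on_frechet_derivative(1)[OF \<rho> U(2)]]
    unfolding differentiable_def by blast
  have "((\<lambda>z'. (z', \<rho> z' *v u)) has_derivative
      (\<lambda>v. (v, \<chi> l. frechet_derivative (\<lambda>z'. (\<rho> z' *v u) $ l) (at z) v))) (at z)"
    by (rule has_derivative_Pair[OF has_derivative_ident holo_on_vec_has_derivative[OF \<phi> U(2)]])
  then have H_diff: "(\<lambda>z'. partial_etabar L j (z', \<rho> z' *v u)) differentiable (at z)" for j
    using differentiable_compose[of "partial_etabar L j" "\<lambda>z'. (z', \<rho> z' *v u)" z UNIV]
      partial_etabar_differentiable[OF L U] unfolding differentiable_def by blast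
  have \<phi>_dZ: "dZ k (\<lambda>z'. (\<rho> z' *v u) $ l) z = (\<Sum>\<gamma>\<in>UNIV. u $ \<gamma> * dZ k (\<lambda>z'. \<rho> z' $ l $ \<gamma>) z)" for l
    using \<rho>_diff by (simp add: matrix_vector_mult_def dZ_sum dZ_mult dZ_const mult.commute)
  have "dZ k (\<lambda>z'. dZbar b (\<lambda>w. complex_of_real (L z' (\<rho> z' *v w))) u) z
      = (\<Sum>j\<in>UNIV. (dZ k (\<lambda>z'. partial_etabar L j (z', \<rho> z *v u)) z
          + (\<Sum>l\<in>UNIV. (\<Sum>\<gamma>\<in>UNIV. u $ \<gamma> * dZ k (\<lambda>z'. \<rho> z' $ l $ \<gamma>) z)
                       * metric L z (\<rho> z *v u) $ l $ j)) * cnj (\<rho> z $ j $ b))" for b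
  proof -
    have "dZ k (\<lambda>z'. dZbar b (\<lambda>w. complex_of_real (L z' (\<rho> z' *v w))) u) z
        = dZ k (\<lambda>z'. \<Sum>j\<in>UNIV. cnj (\<rho> z' $ j $ b) * partial_etabar L j (z', \<rho> z' *v u)) z"
      using U by (intro dZ_cong_open) (auto simp: dZbar_pullback[OF L])
    also have "\<dots> = (\<Sum>j\<in>UNIV. cnj (\<rho> z $ j $ b) * dZ k (\<lambda>z'. partial_etabar L j (z', \<rho> z' *v u)) z)"
      using H_diff cnj_\<rho>_diff by (simp add: dZ_sum dZ_mult dZ_cnj_holo_on[OF \<rho> U(2)])
    also have "\<dots> = (\<Sum>j\<in>UNIV. cnj (\<rho> z $ j $ b) * (dZ k (\<lambda>z'. partial_etabar L j (z', \<rho> z *v u)) z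
          + (\<Sum>l\<in>UNIV. (\<Sum>\<gamma>\<in>UNIV. u $ \<gamma> * dZ k (\<lambda>z'. \<rho> z' $ l $ \<gamma>) z)
                       * metric L z (\<rho> z *v u) $ l $ j)))"
      by (simp add: dZ_compose_holomorphic[OF partial_etabar_differentiable[OF L U] \<phi> U(2)]
          \<phi>_dZ metric_eq_dZ_partial_etabar)
    finally show ?thesis
      by (simp add: mult.commute)
  qed
  then show ?thesis
    by (simp add: vec_eq_iff vector_matrix_mult_def conj_mat_def)
qed

theorem proposition3p3:
  fixes U :: "(complex^'n) set"
    and \<rho> :: "complex^'n \<Rightarrow> complex^'m^'n"
    and L :: "complex^'n \<Rightarrow> complex^'n \<Rightarrow> real"
    and z :: "complex^'n" and u :: "complex^'m"
    and Y :: "complex^'k^'n"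
    and \<rho>inv :: "complex^'n^'m" and Yinv :: "complex^'n^'k"
  assumes mn: "CARD('m) < CARD('n)"
    and kdim: "CARD('k) = CARD('n) - CARD('m)"
    and U_open: "open U"
    and \<rho>_holo: "\<And>i \<alpha>. holo_on U (\<lambda>z. \<rho> z $ i $ \<alpha>)"
    and \<rho>_rank: "\<And>z. z \<in> U \<Longrightarrow> rank (\<rho> z) = CARD('m)"
    and L_C2: "C2_on (U \<times> UNIV) (\<lambda>(z, \<eta>). L z \<eta>)"
    and L_nondeg: "\<And>z \<eta>. z \<in> U \<Longrightarrow> det (metric L z \<eta>) \<noteq> 0"
    and zU: "z \<in> U"
    and Y_orth: "\<And>a \<alpha>. (\<Sum>i\<in>UNIV. \<Sum>j\<in>UNIV. metric L z (\<rho> z *v u) $ i $ j *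
                      Y $ i $ a * cnj (\<rho> z $ j $ \<alpha>)) = 0"
    and Y_unit: "\<And>a b. (\<Sum>i\<in>UNIV. \<Sum>j\<in>UNIV. metric L z (\<rho> z *v u) $ i $ j *
                      Y $ i $ a * cnj (Y $ j $ b)) = (if a = b then 1 else 0)"
    and inv1: "\<rho>inv ** \<rho> z = mat 1"
    and inv2: "\<rho>inv ** Y = 0"
    and inv3: "Yinv ** \<rho> z = 0"
    and inv4: "Yinv ** Y = mat 1"
    and inv5: "\<rho> z ** \<rho>inv + Y ** Yinv = mat 1"
  shows "\<forall>\<alpha> k.
     (\<Sum>i\<in>UNIV. \<rho>inv $ \<alpha> $ i *
        (chern_lagrange_N L z (\<rho> z *v u) i k +
         (\<Sum>\<gamma>\<in>UNIV. u $ \<gamma> * dZ k (\<lambda>z'. \<rho> z' $ i $ \<gamma>) z)))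
   = (let gstar = (\<chi> \<alpha>' \<beta>. dZ \<alpha>' (\<lambda>u'. dZbar \<beta>
                       (\<lambda>u''. complex_of_real (L z (\<rho> z *v u''))) u') u)
      in (\<Sum>\<beta>\<in>UNIV. matrix_inv gstar $ \<beta> $ \<alpha> *
            dZ k (\<lambda>z'. dZbar \<beta> (\<lambda>u'. complex_of_real (L z' (\<rho> z' *v u'))) u) z))"
proof (intro allI, goal_cases)
  case (1 \<alpha> k)
  define G where "G = metric L z (\<rho> z *v u)"
  define N where "N = (\<chi> j. dZ k (\<lambda>z'. partial_etabar L j (z', \<rho> z *v u)) z)"
  define D\<rho>u where "D\<rho>u = (\<chi> l. \<Sum>\<gamma>\<in>UNIV. u $ \<gamma> * dZ k (\<lambda>z'. \<rho> z' $ l $ \<gamma>) z)"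
  have G_inv: "invertible G"
    unfolding G_def using L_nondeg[OF zU] invertible_det_nz by blast
  have orth: "transpose Y ** G ** conj_mat (\<rho> z) = 0"
    using Y_orth by (simp add: vec_eq_iff transpose_mult_conj_mat_nth G_def)
  have chern: "chern_lagrange_N L z (\<rho> z *v u) i k = (N v* matrix_inv G) $ i" for i
    by (simp add: chern_lagrange_N_def vector_matrix_mult_def N_def G_def partial_etabar_def
        mult.commute)
  have "(N v* matrix_inv G + D\<rho>u) v* G = N + D\<rho>u v* G"
    by (simp add: vector_matrix_left_distrib vector_matrix_mul_assoc matrix_inv_mult[OF G_inv])
  then have solve: "\<rho>inv *v (N v* matrix_inv G + D\<rho>u)
      = ((N + D\<rho>u v* G) v* conj_mat (\<rho> z)) v* matrix_inv (transpose (\<rho> z) ** G ** conj_mat (\<rho> z))"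
    using pullback_metric_inverse_solve[OF G_inv orth inv1 inv5, of "N v* matrix_inv G + D\<rho>u"]
    by (metis vector_matrix_mul_assoc)
  have mixed: "dZ k (\<lambda>z'. dZbar \<beta> (\<lambda>w. complex_of_real (L z' (\<rho> z' *v w))) u) z
      = ((N + D\<rho>u v* G) v* conj_mat (\<rho> z)) $ \<beta>" for \<beta>
    using mixed_pullback[OF L_C2 U_open zU \<rho>_holo, of k u]
    by (simp add: vec_eq_iff N_def D\<rho>u_def G_def)
  show ?case
    using arg_cong[OF solve, of "\<lambda>v. v $ \<alpha>"]
    unfolding Let_def metric_pullback[OF L_C2 U_open zU] G_def[symmetric]
    by (simp add: mixed matrix_vector_mult_def[of \<rho>inv] chern D\<rho>u_def
        vector_matrix_mult_def[of _ "matrix_inv (transpose (\<rho> z) ** G ** conj_mat (\<rho> z))"] mult.commute)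
qed

end
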